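(* Let $G,H$ be groups, $K\le H$, $\phi\in\mathrm{Hom}(H,G)$, and let $\mathcal{T}:A^G\to A^H$ be a $\phi$-cellular automaton with memory set contained in $\phi(K)$. Then: (1) $\mathcal{T}$ is injective if and only if $\mathcal{T}_K$ is injective and $\phi$ is surjective; (2) $\mathcal{T}$ is bijective if and only if $\mathcal{T}_K$ is bijective and $\phi$ is bijective.
   Context: $A$ is a finite set with $|A|\ge 2$. For a group $G$, $A^G$ is the set of functions $G\to A$ with shift action $(g\cdot x)(k):=x(g^{-1}k)$. For $\phi\in\mathrm{Hom}(H,G)$, a $\phi$-cellular automaton is a map $\mathcal{T}:A^G\to A^H$ for which there exist finite $T\subseteq G$ (memory set) and $\mu:A^T\to A$ (local function) with $\mathcal{T}(x)(h)=\mu((\phi(h^{-1})\cdot x)|_T)$ for all $x,h$. If the memory set $T$ is contained in $\phi(K)$, the restriction $\mathcal{T}_K:A^{\phi(K)}\to A^K$ is defined by $\mathcal{T}_K(x)(k):=\mu((\phi(k^{-1})\cdot x)|_T)$ for $x\in A^{\phi(K)}$, $k\in K$; equivalently it is the unique $\phi|_K^{\phi(K)}$-cellular automaton with $\mathcal{T}(x)|_K=\mathcal{T}_K(x|_{\phi(K)})$ for all $x\in A^G$. *)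

theory Defs
  imports "HOL-Algebra.Algebra" "HOL-Library.FuncSet"
begin

definition cshift :: "('g,'c) monoid_scheme \<Rightarrow> 'g set \<Rightarrow> 'g \<Rightarrow> ('g \<Rightarrow> 'a) \<Rightarrow> ('g \<Rightarrow> 'a)" where
  "cshift G S g x = (\<lambda>k\<in>S. x (inv\<^bsub>G\<^esub> g \<otimes>\<^bsub>G\<^esub> k))"

text \<open>With S = carrier G, D = carrier H this is the phi-cellular
  automaton with memory set M and local function mu; with S = phi(K), D = K it is
  the restriction T_K.\<close>
definition phi_CA_map ::
  "('g,'c) monoid_scheme \<Rightarrow> ('h,'d) monoid_scheme \<Rightarrow> ('h \<Rightarrow> 'g) \<Rightarrow> 'g set \<Rightarrow> 'g set
    \<Rightarrow> (('g \<Rightarrow> 'a) \<Rightarrow> 'a) \<Rightarrow> 'h set \<Rightarrow> ('g \<Rightarrow> 'a) \<Rightarrow> ('h \<Rightarrow> 'a)" where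
  "phi_CA_map G H \<phi> S M \<mu> D x = (\<lambda>h\<in>D. \<mu> (restrict (cshift G S (\<phi> (inv\<^bsub>H\<^esub> h)) x) M))"

end

theory Submission
  imports Defs
begin

text \<open>
  The value of \<open>\<T> x\<close> at \<open>h\<close> depends only on \<open>x\<close> on the translate \<open>\<phi>(h) \<phi>(K)\<close>, where it
  is \<open>\<T>\<^sub>K\<close> applied to the translated pattern.  Hence \<open>\<T>\<close> ignores \<open>x\<close> off \<open>\<phi>(H)\<close>, which forces
  \<open>\<phi>\<close> onto when \<open>\<T>\<close> is injective; \<open>\<T> x\<close> is constant on the fibres of \<open>\<phi>\<close>, which forces \<open>\<phi>\<close>
  injective when \<open>\<T>\<close> is onto; and padding a pattern on \<open>\<phi>(K)\<close> by a constant turns \<open>\<T>\<close> into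
  \<open>\<T>\<^sub>K\<close>.  Conversely, if \<open>\<phi>\<close> is bijective, a preimage under \<open>\<T>\<close> is glued together coset by
  coset from preimages under \<open>\<T>\<^sub>K\<close>, after choosing a representative of every left coset of \<open>K\<close>.
\<close>

definition coset_rep :: "('g,'c) monoid_scheme \<Rightarrow> 'g set \<Rightarrow> 'g \<Rightarrow> 'g" where
  "coset_rep G K h = (SOME r. r \<in> h <#\<^bsub>G\<^esub> K)"

context group
begin

lemma coset_rep_in_l_coset:
  assumes "subgroup K G" "h \<in> carrier G"
  shows "coset_rep G K h \<in> h <# K"
  unfolding coset_rep_def using lcos_self[OF assms(2,1)] by (rule someI)

lemma coset_rep_closed:
  assumes "subgroup K G" "h \<in> carrier G"
  shows "coset_rep G K h \<in> carrier G"
  using l_coset_carrier[OF coset_rep_in_l_coset[OF assms] assms(2,1)] .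

lemma coset_rep_mult:
  assumes K: "subgroup K G" and h: "h \<in> carrier G" and k: "k \<in> K"
  shows "coset_rep G K (coset_rep G K h \<otimes> k) = coset_rep G K h"
proof -
  let ?r = "coset_rep G K h"
  have r: "?r \<in> carrier G" by (rule coset_rep_closed[OF K h])
  have "?r \<otimes> k \<in> ?r <# K" using k by (auto simp: l_coset_def)
  then have "(?r \<otimes> k) <# K = h <# K"
    using l_repr_independence[OF coset_rep_in_l_coset[OF K h] h K]
      l_repr_independence[OF _ r K] by simp
  then show ?thesis by (simp add: coset_rep_def)
qed

lemma inv_coset_rep_mult_mem:
  assumes K: "subgroup K G" and h: "h \<in> carrier G"
  shows "inv (coset_rep G K h) \<otimes> h \<in> K"
  using subgroup.lcos_module_imp[OF K is_group coset_rep_closed[OF K h]]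
    l_coset_swap[OF coset_rep_in_l_coset[OF K h] h K] .

lemma subgroup_mult_mem_cancel:
  assumes J: "subgroup J G" and g: "g \<in> carrier G" and j: "j \<in> J" and gj: "g \<otimes> j \<in> J"
  shows "g \<in> J"
proof -
  have jG: "j \<in> carrier G" using subgroup.mem_carrier[OF J j] .
  have "g = (g \<otimes> j) \<otimes> inv j" using g jG by (simp add: m_assoc)
  also have "\<dots> \<in> J" using gj j J by (simp add: subgroup.m_closed subgroup.m_inv_closed)
  finally show ?thesis .
qed

end

lemma bij_betw_iff_inj_on_subset_image:
  "f ` A \<subseteq> B \<Longrightarrow> bij_betw f A B \<longleftrightarrow> inj_on f A \<and> B \<subseteq> f ` A"
  by (auto simp: bij_betw_def)

lemma cshift_one:
  assumes "group G" "S \<subseteq> carrier G"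
  shows "cshift G S \<one>\<^bsub>G\<^esub> x = restrict x S"
proof -
  interpret group G by fact
  show ?thesis unfolding cshift_def using assms(2) by (intro restrict_ext) auto
qed

lemma phi_CA_map_apply:
  assumes "group_hom H G \<phi>" "M \<subseteq> S" "S \<subseteq> carrier G" "D \<subseteq> carrier H" "h \<in> D"
  shows "phi_CA_map G H \<phi> S M \<mu> D x h = \<mu> (\<lambda>m\<in>M. x (\<phi> h \<otimes>\<^bsub>G\<^esub> m))"
proof -
  interpret group_hom H G \<phi> by fact
  have "inv\<^bsub>G\<^esub> (\<phi> (inv\<^bsub>H\<^esub> h)) = \<phi> h" using assms(4,5) by auto
  then show ?thesis
    unfolding phi_CA_map_def cshift_def using assms by (simp add: Int_absorb1)
qed

lemma phi_CA_map_PiE: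
  assumes "group_hom H G \<phi>" "M \<subseteq> S" "S \<subseteq> carrier G" "D \<subseteq> carrier H"
    and "\<mu> \<in> (M \<rightarrow>\<^sub>E A) \<rightarrow> A" and "\<And>h m. h \<in> D \<Longrightarrow> m \<in> M \<Longrightarrow> \<phi> h \<otimes>\<^bsub>G\<^esub> m \<in> S"
    and "x \<in> S \<rightarrow>\<^sub>E A"
  shows "phi_CA_map G H \<phi> S M \<mu> D x \<in> D \<rightarrow>\<^sub>E A"
proof (rule PiE_I)
  fix h assume h: "h \<in> D"
  have "(\<lambda>m\<in>M. x (\<phi> h \<otimes>\<^bsub>G\<^esub> m)) \<in> M \<rightarrow>\<^sub>E A" using assms(6,7) h by auto
  with assms(5) show "phi_CA_map G H \<phi> S M \<mu> D x h \<in> A"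
    unfolding phi_CA_map_apply[OF assms(1-4) h] by (rule funcset_mem)
qed (simp add: phi_CA_map_def)

locale phi_cellular_automaton =
  fixes G :: "('g,'c) monoid_scheme" and H :: "('h,'d) monoid_scheme"
    and K :: "'h set" and \<phi> :: "'h \<Rightarrow> 'g"
    and M :: "'g set" and \<mu> :: "('g \<Rightarrow> 'a) \<Rightarrow> 'a" and A :: "'a set"
  assumes group_G: "group G" and group_H: "group H" and subgroup_K: "subgroup K H"
    and hom_\<phi>: "\<phi> \<in> hom H G"
    and memory_subset: "M \<subseteq> \<phi> ` K"
    and local_rule: "\<mu> \<in> (M \<rightarrow>\<^sub>E A) \<rightarrow> A"
begin

sublocale G: group G by (rule group_G)
sublocale H: group H by (rule group_H)
sublocale K: subgroup K H by (rule subgroup_K)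
sublocale \<phi>: group_hom H G \<phi>
  using group_G group_H hom_\<phi> by (simp add: group_hom_def group_hom_axioms_def)

abbreviation "\<T> \<equiv> phi_CA_map G H \<phi> (carrier G) M \<mu> (carrier H)"
abbreviation "\<T>\<^sub>K \<equiv> phi_CA_map G H \<phi> (\<phi> ` K) M \<mu> K"
abbreviation "window h x \<equiv> cshift G (\<phi> ` K) (inv\<^bsub>G\<^esub> \<phi> h) x"

lemma subgroup_image_K: "subgroup (\<phi> ` K) G"
  using \<phi>.subgroup_img_is_subgroup[OF subgroup_K] .

lemma image_K_subset: "\<phi> ` K \<subseteq> carrier G"
  using subgroup.subset[OF subgroup_image_K] .

lemma memory_subset_carrier: "M \<subseteq> carrier G"
  using memory_subset image_K_subset by (rule order_trans)

lemma mult_memory_mem_image_K: "k \<in> K \<Longrightarrow> m \<in> M \<Longrightarrow> \<phi> k \<otimes>\<^bsub>G\<^esub> m \<in> \<phi> ` K"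
  by (intro subgroup.m_closed[OF subgroup_image_K] imageI subsetD[OF memory_subset])

lemma T_apply: "h \<in> carrier H \<Longrightarrow> \<T> x h = \<mu> (\<lambda>m\<in>M. x (\<phi> h \<otimes>\<^bsub>G\<^esub> m))"
  using phi_CA_map_apply[OF \<phi>.group_hom_axioms memory_subset_carrier order_refl order_refl] .

lemma T_K_apply: "k \<in> K \<Longrightarrow> \<T>\<^sub>K x k = \<mu> (\<lambda>m\<in>M. x (\<phi> k \<otimes>\<^bsub>G\<^esub> m))"
  using phi_CA_map_apply[OF \<phi>.group_hom_axioms memory_subset image_K_subset K.subset] .

lemma T_PiE: "x \<in> carrier G \<rightarrow>\<^sub>E A \<Longrightarrow> \<T> x \<in> carrier H \<rightarrow>\<^sub>E A"
  using memory_subset_carrier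
  by (intro phi_CA_map_PiE[OF \<phi>.group_hom_axioms _ _ _ local_rule]) auto

lemma T_K_PiE: "z \<in> \<phi> ` K \<rightarrow>\<^sub>E A \<Longrightarrow> \<T>\<^sub>K z \<in> K \<rightarrow>\<^sub>E A"
  by (intro phi_CA_map_PiE[OF \<phi>.group_hom_axioms memory_subset image_K_subset K.subset
        local_rule mult_memory_mem_image_K])

lemma T_apply_cong:
  assumes h: "h \<in> carrier H"
    and eq: "\<And>k. k \<in> K \<Longrightarrow> x (\<phi> h \<otimes>\<^bsub>G\<^esub> \<phi> k) = y (\<phi> h \<otimes>\<^bsub>G\<^esub> \<phi> k)"
  shows "\<T> x h = \<T> y h"
proof -
  have "x (\<phi> h \<otimes>\<^bsub>G\<^esub> m) = y (\<phi> h \<otimes>\<^bsub>G\<^esub> m)" if m: "m \<in> M" for m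
    using subsetD[OF memory_subset m] by (rule imageE) (simp add: eq)
  then show ?thesis using h by (simp add: T_apply cong: restrict_cong)
qed

lemma T_fibre: "h \<in> carrier H \<Longrightarrow> h' \<in> carrier H \<Longrightarrow> \<phi> h = \<phi> h' \<Longrightarrow> \<T> x h = \<T> x h'"
  by (simp add: T_apply)

lemma T_eq_if_eq_on_image:
  assumes eq: "\<And>g. g \<in> \<phi> ` carrier H \<Longrightarrow> x g = y g"
  shows "\<T> x = \<T> y"
proof
  fix h
  show "\<T> x h = \<T> y h"
  proof (cases "h \<in> carrier H")
    case True
    then show ?thesis
    proof (rule T_apply_cong)
      fix k assume k: "k \<in> K"
      then have "h \<otimes>\<^bsub>H\<^esub> k \<in> carrier H" using True by simp
      from eq[OF imageI[OF this]] show "x (\<phi> h \<otimes>\<^bsub>G\<^esub> \<phi> k) = y (\<phi> h \<otimes>\<^bsub>G\<^esub> \<phi> k)"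
        using True k by simp
    qed
  qed (simp add: phi_CA_map_def)
qed

lemma window_apply: "h \<in> carrier H \<Longrightarrow> g \<in> \<phi> ` K \<Longrightarrow> window h x g = x (\<phi> h \<otimes>\<^bsub>G\<^esub> g)"
  unfolding cshift_def by (simp only: restrict_apply' G.inv_inv \<phi>.hom_closed)

lemma window_PiE:
  assumes x: "x \<in> carrier G \<rightarrow>\<^sub>E A" and h: "h \<in> carrier H"
  shows "window h x \<in> \<phi> ` K \<rightarrow>\<^sub>E A"
proof (rule PiE_I)
  fix g assume g: "g \<in> \<phi> ` K"
  then have "\<phi> h \<otimes>\<^bsub>G\<^esub> g \<in> carrier G" using h subsetD[OF image_K_subset g] by simp
  then show "window h x g \<in> A" unfolding window_apply[OF h g] by (rule PiE_mem[OF x])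
qed (simp add: cshift_def)

lemma window_one: "h \<in> carrier H \<Longrightarrow> window h x \<one>\<^bsub>G\<^esub> = x (\<phi> h)"
  using window_apply[OF _ subgroup.one_closed[OF subgroup_image_K]] by simp

lemma T_K_window:
  assumes h: "h \<in> carrier H"
  shows "\<T>\<^sub>K (window h x) = (\<lambda>k\<in>K. \<T> x (h \<otimes>\<^bsub>H\<^esub> k))"
proof (rule ext)
  fix k
  show "\<T>\<^sub>K (window h x) k = (\<lambda>k\<in>K. \<T> x (h \<otimes>\<^bsub>H\<^esub> k)) k"
  proof (cases "k \<in> K")
    case k: True
    have "window h x (\<phi> k \<otimes>\<^bsub>G\<^esub> m) = x (\<phi> (h \<otimes>\<^bsub>H\<^esub> k) \<otimes>\<^bsub>G\<^esub> m)" if m: "m \<in> M" for m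
    proof -
      have "m \<in> carrier G" using subsetD[OF memory_subset_carrier m] .
      then show ?thesis
        using h k window_apply[OF h mult_memory_mem_image_K[OF k m]] by (simp add: G.m_assoc)
    qed
    then show ?thesis using h k by (simp add: T_apply T_K_apply cong: restrict_cong)
  qed (simp add: phi_CA_map_def)
qed

lemma T_K_restrict: "\<T>\<^sub>K (restrict x (\<phi> ` K)) = restrict (\<T> x) K"
  using T_K_window[OF H.one_closed, of x]
  by (simp add: cshift_one[OF group_G image_K_subset] cong: restrict_cong)

lemma surj_hom_if_inj_T:
  assumes inj: "inj_on \<T> (carrier G \<rightarrow>\<^sub>E A)" and a: "a \<in> A" and b: "b \<in> A" and "a \<noteq> b"
  shows "\<phi> ` carrier H = carrier G"
proof (rule ccontr)
  assume "\<phi> ` carrier H \<noteq> carrier G"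
  moreover have "\<phi> ` carrier H \<subseteq> carrier G" by (rule image_subsetI) simp
  ultimately obtain g where g: "g \<in> carrier G" "g \<notin> \<phi> ` carrier H" by auto
  define x where "x = (\<lambda>g'\<in>carrier G. if g' = g then b else a)"
  define y where "y = (\<lambda>g'\<in>carrier G. a)"
  have "x \<in> carrier G \<rightarrow>\<^sub>E A" "y \<in> carrier G \<rightarrow>\<^sub>E A" using a b by (simp_all add: x_def y_def)
  moreover have "\<T> x = \<T> y"
    by (rule T_eq_if_eq_on_image) (use g(2) \<phi>.hom_closed in \<open>auto simp: x_def y_def\<close>)
  ultimately have "x = y" by (rule inj_onD[OF inj, rotated])
  then have "x g = y g" by simp
  with g(1) \<open>a \<noteq> b\<close> show False by (simp add: x_def y_def)
qed

definition pad :: "'a \<Rightarrow> ('g \<Rightarrow> 'a) \<Rightarrow> 'g \<Rightarrow> 'a" where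
  "pad a z = (\<lambda>g\<in>carrier G. if g \<in> \<phi> ` K then z g else a)"

lemma pad_PiE: "a \<in> A \<Longrightarrow> z \<in> \<phi> ` K \<rightarrow>\<^sub>E A \<Longrightarrow> pad a z \<in> carrier G \<rightarrow>\<^sub>E A"
  by (auto simp: pad_def)

lemma restrict_pad:
  assumes "z \<in> \<phi> ` K \<rightarrow>\<^sub>E A"
  shows "restrict (pad a z) (\<phi> ` K) = z"
proof -
  have "restrict (pad a z) (\<phi> ` K) = restrict z (\<phi> ` K)"
    using image_K_subset by (intro restrict_ext) (auto simp: pad_def)
  then show ?thesis using PiE_restrict[OF assms] by simp
qed

lemma T_pad_image_K:
  assumes h: "h \<in> carrier H" and k: "k \<in> K" "\<phi> h = \<phi> k" and z: "z \<in> \<phi> ` K \<rightarrow>\<^sub>E A"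
  shows "\<T> (pad a z) h = \<T>\<^sub>K z k"
proof -
  have "\<T> (pad a z) h = \<T> (pad a z) k" using T_fibre[OF h _ k(2)] k(1) by simp
  also have "\<dots> = \<T>\<^sub>K z k"
    using fun_cong[OF T_K_restrict, of "pad a z" k] k(1) by (simp add: restrict_pad[OF z])
  finally show ?thesis .
qed

lemma T_pad_outside_image_K:
  assumes h: "h \<in> carrier H" and h_out: "\<phi> h \<notin> \<phi> ` K"
  shows "\<T> (pad a z) h = \<T> (\<lambda>g\<in>carrier G. a) h"
proof (rule T_apply_cong[OF h])
  fix k assume k: "k \<in> K"
  have "\<phi> h \<otimes>\<^bsub>G\<^esub> \<phi> k \<notin> \<phi> ` K"
    using G.subgroup_mult_mem_cancel[OF subgroup_image_K _ imageI[OF k]] h h_out by auto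
  then show "pad a z (\<phi> h \<otimes>\<^bsub>G\<^esub> \<phi> k) = (\<lambda>g\<in>carrier G. a) (\<phi> h \<otimes>\<^bsub>G\<^esub> \<phi> k)"
    by (simp add: pad_def)
qed

lemma inj_on_T_K_if_inj_T:
  assumes inj: "inj_on \<T> (carrier G \<rightarrow>\<^sub>E A)" and a: "a \<in> A"
  shows "inj_on \<T>\<^sub>K (\<phi> ` K \<rightarrow>\<^sub>E A)"
proof (rule inj_onI)
  fix z z' assume z: "z \<in> \<phi> ` K \<rightarrow>\<^sub>E A" and z': "z' \<in> \<phi> ` K \<rightarrow>\<^sub>E A" and eq: "\<T>\<^sub>K z = \<T>\<^sub>K z'"
  have "\<T> (pad a z) h = \<T> (pad a z') h" for h
  proof (cases "h \<in> carrier H")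
    case h: True
    show ?thesis
    proof (cases "\<phi> h \<in> \<phi> ` K")
      case True
      then obtain k where "\<phi> h = \<phi> k" "k \<in> K" by (rule imageE)
      then show ?thesis using T_pad_image_K[OF h] z z' eq by simp
    qed (simp add: T_pad_outside_image_K[OF h])
  qed (simp add: phi_CA_map_def)
  then have "pad a z = pad a z'" by (intro inj_onD[OF inj] pad_PiE a z z') auto
  then show "z = z'" using restrict_pad[OF z] restrict_pad[OF z'] by metis
qed

lemma inj_on_T_if:
  assumes inj: "inj_on \<T>\<^sub>K (\<phi> ` K \<rightarrow>\<^sub>E A)" and surj: "\<phi> ` carrier H = carrier G"
  shows "inj_on \<T> (carrier G \<rightarrow>\<^sub>E A)"
proof (rule inj_onI)
  fix x y assume x: "x \<in> carrier G \<rightarrow>\<^sub>E A" and y: "y \<in> carrier G \<rightarrow>\<^sub>E A" and eq: "\<T> x = \<T> y"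
  show "x = y"
  proof (rule PiE_ext[OF x y])
    fix g assume "g \<in> carrier G"
    from this[folded surj] obtain h where g: "g = \<phi> h" and h: "h \<in> carrier H" by (rule imageE)
    have "\<T>\<^sub>K (window h x) = \<T>\<^sub>K (window h y)" using eq by (simp add: T_K_window[OF h])
    then have "window h x = window h y"
      by (rule inj_onD[OF inj _ window_PiE[OF x h] window_PiE[OF y h]])
    then show "x g = y g" using window_one[OF h] g by metis
  qed
qed

lemma inj_on_hom_if_surj_T:
  assumes surj: "carrier H \<rightarrow>\<^sub>E A \<subseteq> \<T> ` (carrier G \<rightarrow>\<^sub>E A)" and a: "a \<in> A" and b: "b \<in> A"
    and "a \<noteq> b"
  shows "inj_on \<phi> (carrier H)"
proof (rule inj_onI, rule ccontr)
  fix h h' assume h: "h \<in> carrier H" and h': "h' \<in> carrier H" and eq: "\<phi> h = \<phi> h'" and "h \<noteq> h'"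
  define y where "y = (\<lambda>h''\<in>carrier H. if h'' = h then a else b)"
  have "y \<in> carrier H \<rightarrow>\<^sub>E A" using a b by (simp add: y_def)
  then obtain x where "y = \<T> x" using surj by auto
  then have "y h = y h'" using T_fibre[OF h h' eq] by simp
  with h h' \<open>h \<noteq> h'\<close> \<open>a \<noteq> b\<close> show False by (simp add: y_def)
qed

lemma surj_T_K_if_surj_T:
  assumes surj: "carrier H \<rightarrow>\<^sub>E A \<subseteq> \<T> ` (carrier G \<rightarrow>\<^sub>E A)" and a: "a \<in> A"
  shows "K \<rightarrow>\<^sub>E A \<subseteq> \<T>\<^sub>K ` (\<phi> ` K \<rightarrow>\<^sub>E A)"
proof
  fix y assume y: "y \<in> K \<rightarrow>\<^sub>E A"
  define Y where "Y = (\<lambda>h\<in>carrier H. if h \<in> K then y h else a)"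
  have "Y \<in> carrier H \<rightarrow>\<^sub>E A" using y a by (auto simp: Y_def)
  then obtain x where x: "x \<in> carrier G \<rightarrow>\<^sub>E A" and Y: "Y = \<T> x" using surj by auto
  have "restrict Y K = restrict y K" using K.subset by (intro restrict_ext) (auto simp: Y_def)
  then have "\<T>\<^sub>K (restrict x (\<phi> ` K)) = y" by (simp add: T_K_restrict Y PiE_restrict[OF y])
  moreover have "restrict x (\<phi> ` K) \<in> \<phi> ` K \<rightarrow>\<^sub>E A" using x image_K_subset by auto
  ultimately show "y \<in> \<T>\<^sub>K ` (\<phi> ` K \<rightarrow>\<^sub>E A)" by (rule image_eqI[OF sym])
qed

text \<open>For injective \<open>\<phi>\<close>: put the pattern \<open>z r\<close> on the translate \<open>\<phi> r \<phi>(K)\<close> of each chosen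
  coset representative \<open>r\<close>.\<close>
definition glue :: "('h \<Rightarrow> 'g \<Rightarrow> 'a) \<Rightarrow> 'g \<Rightarrow> 'a" where
  "glue z = (\<lambda>g\<in>carrier G. let h = the_inv_into (carrier H) \<phi> g; r = coset_rep H K h
      in z r (\<phi> (inv\<^bsub>H\<^esub> r \<otimes>\<^bsub>H\<^esub> h)))"

lemma glue_apply:
  assumes "inj_on \<phi> (carrier H)" and "h \<in> carrier H"
  shows "glue z (\<phi> h) = z (coset_rep H K h) (\<phi> (inv\<^bsub>H\<^esub> coset_rep H K h \<otimes>\<^bsub>H\<^esub> h))"
  unfolding glue_def using the_inv_into_f_f[OF assms] assms(2) by (simp add: Let_def)

lemma glue_PiE:
  assumes bij: "bij_betw \<phi> (carrier H) (carrier G)"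
    and z: "\<And>r. r \<in> carrier H \<Longrightarrow> z r \<in> \<phi> ` K \<rightarrow>\<^sub>E A"
  shows "glue z \<in> carrier G \<rightarrow>\<^sub>E A"
proof (rule PiE_I)
  fix g assume "g \<in> carrier G"
  then obtain h where g: "g = \<phi> h" and h: "h \<in> carrier H"
    using bij unfolding bij_betw_def by (metis imageE)
  let ?r = "coset_rep H K h"
  have "\<phi> (inv\<^bsub>H\<^esub> ?r \<otimes>\<^bsub>H\<^esub> h) \<in> \<phi> ` K"
    using H.inv_coset_rep_mult_mem[OF subgroup_K h] by (rule imageI)
  then show "glue z g \<in> A"
    unfolding g glue_apply[OF bij_betw_imp_inj_on[OF bij] h]
    by (rule PiE_mem[OF z[OF H.coset_rep_closed[OF subgroup_K h]]])
qed (simp add: glue_def)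

lemma window_glue:
  assumes bij: "bij_betw \<phi> (carrier H) (carrier G)"
    and z: "\<And>r. r \<in> carrier H \<Longrightarrow> z r \<in> \<phi> ` K \<rightarrow>\<^sub>E A" and h: "h \<in> carrier H"
  shows "window (coset_rep H K h) (glue z) = z (coset_rep H K h)"
proof -
  let ?r = "coset_rep H K h"
  have r: "?r \<in> carrier H" using H.coset_rep_closed[OF subgroup_K h] .
  show ?thesis
  proof (rule PiE_ext[OF window_PiE[OF glue_PiE[OF bij z] r] z[OF r]])
    fix g assume "g \<in> \<phi> ` K"
    then obtain k where g: "g = \<phi> k" and k: "k \<in> K" by (rule imageE)
    have rk: "?r \<otimes>\<^bsub>H\<^esub> k \<in> carrier H" using r k by simp
    have "window ?r (glue z) g = glue z (\<phi> ?r \<otimes>\<^bsub>G\<^esub> \<phi> k)"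
      using window_apply[OF r \<open>g \<in> \<phi> ` K\<close>] g by simp
    also have "\<dots> = glue z (\<phi> (?r \<otimes>\<^bsub>H\<^esub> k))" using r k by simp
    also have "\<dots> = z ?r (\<phi> (inv\<^bsub>H\<^esub> ?r \<otimes>\<^bsub>H\<^esub> (?r \<otimes>\<^bsub>H\<^esub> k)))"
      by (simp only: glue_apply[OF bij_betw_imp_inj_on[OF bij] rk]
          H.coset_rep_mult[OF subgroup_K h k])
    also have "inv\<^bsub>H\<^esub> ?r \<otimes>\<^bsub>H\<^esub> (?r \<otimes>\<^bsub>H\<^esub> k) = k" using r k by (simp add: H.m_assoc[symmetric])
    finally show "window ?r (glue z) g = z ?r g" using g by simp
  qed
qed

lemma surj_T_if:
  assumes bij: "bij_betw \<phi> (carrier H) (carrier G)"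
    and bij_K: "bij_betw \<T>\<^sub>K (\<phi> ` K \<rightarrow>\<^sub>E A) (K \<rightarrow>\<^sub>E A)"
  shows "carrier H \<rightarrow>\<^sub>E A \<subseteq> \<T> ` (carrier G \<rightarrow>\<^sub>E A)"
proof
  fix y assume y: "y \<in> carrier H \<rightarrow>\<^sub>E A"
  define z where "z r = the_inv_into (\<phi> ` K \<rightarrow>\<^sub>E A) \<T>\<^sub>K (\<lambda>k\<in>K. y (r \<otimes>\<^bsub>H\<^esub> k))" for r
  have z: "z r \<in> \<phi> ` K \<rightarrow>\<^sub>E A" "\<T>\<^sub>K (z r) = (\<lambda>k\<in>K. y (r \<otimes>\<^bsub>H\<^esub> k))" if r: "r \<in> carrier H" for r
  proof -
    have y_r: "(\<lambda>k\<in>K. y (r \<otimes>\<^bsub>H\<^esub> k)) \<in> K \<rightarrow>\<^sub>E A" using r by (simp add: PiE_mem[OF y])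
    show "z r \<in> \<phi> ` K \<rightarrow>\<^sub>E A"
      unfolding z_def by (rule bspec[OF bij_betwE[OF bij_betw_the_inv_into[OF bij_K]] y_r])
    show "\<T>\<^sub>K (z r) = (\<lambda>k\<in>K. y (r \<otimes>\<^bsub>H\<^esub> k))"
      unfolding z_def by (rule f_the_inv_into_f_bij_betw[OF bij_K y_r])
  qed
  have "\<T> (glue z) = y"
  proof
    fix h
    show "\<T> (glue z) h = y h"
    proof (cases "h \<in> carrier H")
      case h: True
      let ?r = "coset_rep H K h"
      let ?k = "inv\<^bsub>H\<^esub> ?r \<otimes>\<^bsub>H\<^esub> h"
      have r: "?r \<in> carrier H" using H.coset_rep_closed[OF subgroup_K h] .
      have k: "?k \<in> K" using H.inv_coset_rep_mult_mem[OF subgroup_K h] .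
      have rk: "?r \<otimes>\<^bsub>H\<^esub> ?k = h" using r h by (simp add: H.m_assoc[symmetric])
      have "\<T> (glue z) h = \<T>\<^sub>K (window ?r (glue z)) ?k" using T_K_window[OF r] k rk by simp
      also have "\<dots> = y h" using window_glue[OF bij z(1) h] z(2)[OF r] k rk by simp
      finally show ?thesis .
    qed (simp add: phi_CA_map_def PiE_arb[OF y])
  qed
  then show "y \<in> \<T> ` (carrier G \<rightarrow>\<^sub>E A)" by (rule image_eqI[OF sym glue_PiE[OF bij z(1)]])
qed

lemma inj_T_iff:
  assumes "a \<in> A" "b \<in> A" "a \<noteq> b"
  shows "inj_on \<T> (carrier G \<rightarrow>\<^sub>E A) \<longleftrightarrow>
    inj_on \<T>\<^sub>K (\<phi> ` K \<rightarrow>\<^sub>E A) \<and> \<phi> ` carrier H = carrier G"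
proof
  assume inj: "inj_on \<T> (carrier G \<rightarrow>\<^sub>E A)"
  show "inj_on \<T>\<^sub>K (\<phi> ` K \<rightarrow>\<^sub>E A) \<and> \<phi> ` carrier H = carrier G"
    using inj_on_T_K_if_inj_T[OF inj assms(1)] surj_hom_if_inj_T[OF inj assms] ..
qed (simp add: inj_on_T_if)

lemma bij_T_iff:
  assumes "a \<in> A" "b \<in> A" "a \<noteq> b"
  shows "bij_betw \<T> (carrier G \<rightarrow>\<^sub>E A) (carrier H \<rightarrow>\<^sub>E A) \<longleftrightarrow>
    bij_betw \<T>\<^sub>K (\<phi> ` K \<rightarrow>\<^sub>E A) (K \<rightarrow>\<^sub>E A) \<and> bij_betw \<phi> (carrier H) (carrier G)"
proof
  assume bij_T: "bij_betw \<T> (carrier G \<rightarrow>\<^sub>E A) (carrier H \<rightarrow>\<^sub>E A)"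
  then have inj: "inj_on \<T> (carrier G \<rightarrow>\<^sub>E A)"
    and surj: "carrier H \<rightarrow>\<^sub>E A \<subseteq> \<T> ` (carrier G \<rightarrow>\<^sub>E A)"
    by (simp_all add: bij_betw_def)
  have "\<T>\<^sub>K ` (\<phi> ` K \<rightarrow>\<^sub>E A) \<subseteq> K \<rightarrow>\<^sub>E A" using T_K_PiE by (rule image_subsetI)
  then have "bij_betw \<T>\<^sub>K (\<phi> ` K \<rightarrow>\<^sub>E A) (K \<rightarrow>\<^sub>E A)"
    using inj_on_T_K_if_inj_T[OF inj assms(1)] surj_T_K_if_surj_T[OF surj assms(1)]
    by (simp add: bij_betw_iff_inj_on_subset_image)
  moreover have "bij_betw \<phi> (carrier H) (carrier G)"
    using inj_on_hom_if_surj_T[OF surj assms] surj_hom_if_inj_T[OF inj assms]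
    by (simp add: bij_betw_def)
  ultimately show "bij_betw \<T>\<^sub>K (\<phi> ` K \<rightarrow>\<^sub>E A) (K \<rightarrow>\<^sub>E A) \<and> bij_betw \<phi> (carrier H) (carrier G)" ..
next
  assume "bij_betw \<T>\<^sub>K (\<phi> ` K \<rightarrow>\<^sub>E A) (K \<rightarrow>\<^sub>E A) \<and> bij_betw \<phi> (carrier H) (carrier G)"
  then have bij_K: "bij_betw \<T>\<^sub>K (\<phi> ` K \<rightarrow>\<^sub>E A) (K \<rightarrow>\<^sub>E A)"
    and bij: "bij_betw \<phi> (carrier H) (carrier G)" by simp_all
  have "\<T> ` (carrier G \<rightarrow>\<^sub>E A) \<subseteq> carrier H \<rightarrow>\<^sub>E A" using T_PiE by (rule image_subsetI)
  moreover have "inj_on \<T> (carrier G \<rightarrow>\<^sub>E A)"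
    using inj_on_T_if[OF bij_betw_imp_inj_on[OF bij_K] bij_betw_imp_surj_on[OF bij]] .
  ultimately show "bij_betw \<T> (carrier G \<rightarrow>\<^sub>E A) (carrier H \<rightarrow>\<^sub>E A)"
    using surj_T_if[OF bij bij_K] by (simp add: bij_betw_iff_inj_on_subset_image)
qed

end

theorem theorem5p7:
  fixes G :: "('g,'c) monoid_scheme" and H :: "('h,'d) monoid_scheme"
    and A :: "'a set" and K :: "'h set" and \<phi> :: "'h \<Rightarrow> 'g"
    and T :: "('g \<Rightarrow> 'a) \<Rightarrow> ('h \<Rightarrow> 'a)"
    and M :: "'g set" and \<mu> :: "('g \<Rightarrow> 'a) \<Rightarrow> 'a"
  assumes "group G" and "group H" and "subgroup K H" and "\<phi> \<in> hom H G"
    and "finite A" and "card A \<ge> 2"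
    and "finite M" and "M \<subseteq> \<phi> ` K"
    and "\<mu> \<in> (M \<rightarrow>\<^sub>E A) \<rightarrow> A"
    and "\<forall>x \<in> carrier G \<rightarrow>\<^sub>E A. T x = phi_CA_map G H \<phi> (carrier G) M \<mu> (carrier H) x"
  shows "(inj_on T (carrier G \<rightarrow>\<^sub>E A) \<longleftrightarrow>
            inj_on (phi_CA_map G H \<phi> (\<phi> ` K) M \<mu> K) (\<phi> ` K \<rightarrow>\<^sub>E A) \<and> \<phi> ` carrier H = carrier G)
       \<and> (bij_betw T (carrier G \<rightarrow>\<^sub>E A) (carrier H \<rightarrow>\<^sub>E A) \<longleftrightarrow>
            bij_betw (phi_CA_map G H \<phi> (\<phi> ` K) M \<mu> K) (\<phi> ` K \<rightarrow>\<^sub>E A) (K \<rightarrow>\<^sub>E A)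
            \<and> bij_betw \<phi> (carrier H) (carrier G))"
proof -
  obtain a b where ab: "a \<in> A" "b \<in> A" "a \<noteq> b"
    using assms(6) card_le_Suc0_iff_eq[OF assms(5)] by auto
  interpret phi_cellular_automaton G H K \<phi> M \<mu> A
    using assms(1-4,8,9) by (rule phi_cellular_automaton.intro)
  have T: "\<And>x. x \<in> carrier G \<rightarrow>\<^sub>E A \<Longrightarrow> T x = phi_CA_map G H \<phi> (carrier G) M \<mu> (carrier H) x"
    using assms(10) by simp
  have "inj_on T (carrier G \<rightarrow>\<^sub>E A) \<longleftrightarrow> inj_on \<T> (carrier G \<rightarrow>\<^sub>E A)"
    by (rule inj_on_cong) (rule T)
  moreover have "bij_betw T (carrier G \<rightarrow>\<^sub>E A) (carrier H \<rightarrow>\<^sub>E A) \<longleftrightarrow>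
      bij_betw \<T> (carrier G \<rightarrow>\<^sub>E A) (carrier H \<rightarrow>\<^sub>E A)"
    by (rule bij_betw_cong) (rule T)
  ultimately show ?thesis using inj_T_iff[OF ab] bij_T_iff[OF ab] by simp
qed

end
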